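(* Let $\mathcal L$ be a finite lattice and $C\subseteq\bar{\mathcal L}$ a crosscut. Let $\bar{\mathcal L}_C$ be the set of elements of $\bar{\mathcal L}$ that are either the join of a nonempty subset of $C$ or the meet of a nonempty subset of $C$, with the induced order. Then $\Delta(\bar{\mathcal L})$ collapses onto $\Delta(\bar{\mathcal L}_C)$.
   Context: For a finite lattice $\mathcal L$ with minimum $\hat0$ and maximum $\hat1$, $\bar{\mathcal L}=\mathcal L\setminus\{\hat0,\hat1\}$. A crosscut is a subset $C\subseteq\bar{\mathcal L}$ that is an antichain and such that for every chain $\gamma$ of $\mathcal L$ there exists $x\in C$ with $\gamma\cup\{x\}$ a chain. $\Delta(Q)$ denotes the order complex of a poset $Q$ (simplices = nonempty chains). *)

theory Defs
  imports Main
begin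

definition is_chain :: "'a::order set \<Rightarrow> bool" where
  "is_chain S \<longleftrightarrow> (\<forall>x\<in>S. \<forall>y\<in>S. x \<le> y \<or> y \<le> x)"

definition is_antichain :: "'a::order set \<Rightarrow> bool" where
  "is_antichain S \<longleftrightarrow> (\<forall>x\<in>S. \<forall>y\<in>S. x \<le> y \<longrightarrow> x = y)"

definition proper_part :: "'a::bounded_lattice set" where
  "proper_part = UNIV - {bot, top}"

definition is_crosscut :: "'a::bounded_lattice set \<Rightarrow> bool" where
  "is_crosscut C \<longleftrightarrow> C \<subseteq> proper_part \<and> is_antichain C \<and>
     (\<forall>\<gamma>::'a set. is_chain \<gamma> \<longrightarrow> (\<exists>x\<in>C. is_chain (insert x \<gamma>)))"

definition crosscut_part :: "'a::bounded_lattice set \<Rightarrow> 'a set" where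
  "crosscut_part C = {x \<in> proper_part.
     (\<exists>D. D \<subseteq> C \<and> D \<noteq> {} \<and> x = Sup_fin D) \<or>
     (\<exists>D. D \<subseteq> C \<and> D \<noteq> {} \<and> x = Inf_fin D)}"

definition order_complex :: "'a::order set \<Rightarrow> 'a set set" where
  "order_complex S = {c. c \<noteq> {} \<and> finite c \<and> c \<subseteq> S \<and> is_chain c}"

definition elementary_collapse :: "'a set set \<Rightarrow> 'a set set \<Rightarrow> bool" where
  "elementary_collapse K K' \<longleftrightarrow>
     (\<exists>\<sigma> \<tau>. \<sigma> \<in> K \<and> \<tau> \<in> K \<and> \<sigma> \<subset> \<tau> \<and> card \<tau> = card \<sigma> + 1 \<and>
        (\<forall>\<rho>\<in>K. \<sigma> \<subset> \<rho> \<longrightarrow> \<rho> = \<tau>) \<and> K' = K - {\<sigma>, \<tau>})"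

definition collapses_onto :: "'a set set \<Rightarrow> 'a set set \<Rightarrow> bool" where
  "collapses_onto K K' \<longleftrightarrow> elementary_collapse\<^sup>*\<^sup>* K K'"

end

(* If the faces of a complex containing a vertex x form a cone with apex y, then deleting x
   is a sequence of elementary collapses: pair each face through x but not y with its union
   with y, and remove the pairs largest first.  In an order complex this applies as soon as
   some y is comparable with everything x is comparable with, e.g. the greatest element
   below x.

   Write L for the proper part and L_C for the crosscut part.  First delete, bottom up, the
   elements of L - L_C lying above some crosscut element: below such a w, every surviving
   element is at most the join of the crosscut elements below w, which lies in L_C (if z is
   above no crosscut element, the crosscut meets the chain z <= z v c0 between z and w).
   Then delete, top down, the remaining elements of L - L_C: above such a w, all survivors
   lie in L_C and above the meet of the crosscut elements above w. *)

theory Submission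
  imports Defs
begin

lemma collapses_onto_refl: "collapses_onto K K"
  by (simp add: collapses_onto_def)

lemma collapses_onto_trans:
  "collapses_onto K K' \<Longrightarrow> collapses_onto K' K'' \<Longrightarrow> collapses_onto K K''"
  unfolding collapses_onto_def by (rule rtranclp_trans)

lemma collapses_onto_step:
  "elementary_collapse K K' \<Longrightarrow> collapses_onto K' K'' \<Longrightarrow> collapses_onto K K''"
  unfolding collapses_onto_def by (rule converse_rtranclp_into_rtranclp)

definition star_cone :: "'a set set \<Rightarrow> 'a \<Rightarrow> 'a \<Rightarrow> bool" where
  "star_cone K x y \<longleftrightarrow>
     (\<forall>\<sigma>\<in>K. x \<in> \<sigma> \<longrightarrow> y \<notin> \<sigma> \<longrightarrow> insert y \<sigma> \<in> K) \<and>
     (\<forall>\<rho>\<in>K. x \<in> \<rho> \<longrightarrow> y \<in> \<rho> \<longrightarrow> \<rho> - {y} \<in> K)"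

lemma star_coneD_insert:
  "star_cone K x y \<Longrightarrow> \<sigma> \<in> K \<Longrightarrow> x \<in> \<sigma> \<Longrightarrow> y \<notin> \<sigma> \<Longrightarrow> insert y \<sigma> \<in> K"
  by (simp add: star_cone_def)

lemma star_coneD_remove:
  "star_cone K x y \<Longrightarrow> \<rho> \<in> K \<Longrightarrow> x \<in> \<rho> \<Longrightarrow> y \<in> \<rho> \<Longrightarrow> \<rho> - {y} \<in> K"
  by (simp add: star_cone_def)

lemma elementary_collapse_star_cone:
  assumes cone: "star_cone K x y" and "x \<noteq> y" "finite \<sigma>" "\<sigma> \<in> K" "x \<in> \<sigma>" "y \<notin> \<sigma>"
    and max: "\<And>\<tau>. \<tau> \<in> K \<Longrightarrow> x \<in> \<tau> \<Longrightarrow> y \<notin> \<tau> \<Longrightarrow> \<sigma> \<subseteq> \<tau> \<Longrightarrow> \<tau> = \<sigma>"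
  shows "elementary_collapse K (K - {\<sigma>, insert y \<sigma>})"
proof -
  have free: "\<rho> = insert y \<sigma>" if "\<rho> \<in> K" "\<sigma> \<subset> \<rho>" for \<rho>
  proof (cases "y \<in> \<rho>")
    case True
    have "x \<in> \<rho>" using that \<open>x \<in> \<sigma>\<close> by blast
    then have "\<rho> - {y} \<in> K" using star_coneD_remove[OF cone \<open>\<rho> \<in> K\<close>] True by blast
    then have "\<rho> - {y} = \<sigma>" using max that \<open>x \<in> \<sigma>\<close> \<open>y \<notin> \<sigma>\<close> \<open>x \<noteq> y\<close> by blast
    then show ?thesis using True by blast
  next
    case False
    then show ?thesis using max that \<open>x \<in> \<sigma>\<close> by blast
  qed
  have "insert y \<sigma> \<in> K" using star_coneD_insert[OF cone \<open>\<sigma> \<in> K\<close>] assms by blast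
  moreover have "card (insert y \<sigma>) = card \<sigma> + 1" using assms by simp
  moreover have "\<forall>\<rho>\<in>K. \<sigma> \<subset> \<rho> \<longrightarrow> \<rho> = insert y \<sigma>" using free by blast
  moreover have "\<sigma> \<subset> insert y \<sigma>" using \<open>y \<notin> \<sigma>\<close> by blast
  ultimately show ?thesis
    unfolding elementary_collapse_def using \<open>\<sigma> \<in> K\<close> by blast
qed

lemma star_cone_remove_pair:
  assumes cone: "star_cone K x y" and "y \<notin> \<sigma>"
  shows "star_cone (K - {\<sigma>, insert y \<sigma>}) x y"
  unfolding star_cone_def
proof (intro conjI ballI impI)
  fix \<tau> assume \<tau>: "\<tau> \<in> K - {\<sigma>, insert y \<sigma>}" "x \<in> \<tau>" "y \<notin> \<tau>"
  then have "insert y \<tau> \<in> K" using star_coneD_insert[OF cone] by simp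
  moreover have "insert y \<tau> \<noteq> insert y \<sigma>"
    using \<tau> \<open>y \<notin> \<sigma>\<close> by (simp add: insert_ident)
  ultimately show "insert y \<tau> \<in> K - {\<sigma>, insert y \<sigma>}" using \<open>y \<notin> \<sigma>\<close> by auto
next
  fix \<rho> assume \<rho>: "\<rho> \<in> K - {\<sigma>, insert y \<sigma>}" "x \<in> \<rho>" "y \<in> \<rho>"
  then have "\<rho> - {y} \<in> K" using star_coneD_remove[OF cone] by simp
  moreover have "\<rho> - {y} \<noteq> \<sigma>" using \<rho> by (auto simp: insert_absorb)
  ultimately show "\<rho> - {y} \<in> K - {\<sigma>, insert y \<sigma>}" by blast
qed

lemma collapses_onto_delete_star_cone:
  assumes "finite K" "\<forall>\<sigma>\<in>K. finite \<sigma>" "x \<noteq> y" "star_cone K x y"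
  shows "collapses_onto K {\<sigma>\<in>K. x \<notin> \<sigma>}"
  using assms
proof (induction K rule: finite_psubset_induct)
  case (psubset K)
  define A where "A = {\<sigma>\<in>K. x \<in> \<sigma> \<and> y \<notin> \<sigma>}"
  show ?case
  proof (cases "A = {}")
    case True
    have "x \<notin> \<rho>" if "\<rho> \<in> K" for \<rho>
    proof
      assume "x \<in> \<rho>"
      moreover have "\<rho> - {y} \<in> K" if "y \<in> \<rho>"
        using star_coneD_remove[OF psubset.prems(3) \<open>\<rho> \<in> K\<close> \<open>x \<in> \<rho>\<close> that] .
      ultimately show False
        using True \<open>\<rho> \<in> K\<close> psubset.prems(2) unfolding A_def by blast
    qed
    then have "{\<sigma>\<in>K. x \<notin> \<sigma>} = K" by blast
    then show ?thesis by (simp add: collapses_onto_refl)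
  next
    case False
    obtain \<sigma> where "\<sigma> \<in> A" and max: "\<forall>\<tau>\<in>A. \<sigma> \<subseteq> \<tau> \<longrightarrow> \<sigma> = \<tau>"
      using finite_has_maximal[of A] False psubset.hyps by (auto simp: A_def)
    then have \<sigma>: "\<sigma> \<in> K" "x \<in> \<sigma>" "y \<notin> \<sigma>" by (auto simp: A_def)
    let ?K' = "K - {\<sigma>, insert y \<sigma>}"
    have "elementary_collapse K ?K'"
    proof (rule elementary_collapse_star_cone[OF psubset.prems(3,2) _ \<sigma>])
      show "finite \<sigma>" using psubset.prems(1) \<sigma>(1) by blast
      show "\<tau> = \<sigma>" if "\<tau> \<in> K" "x \<in> \<tau>" "y \<notin> \<tau>" "\<sigma> \<subseteq> \<tau>" for \<tau>
        using max that unfolding A_def by blast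
    qed
    moreover have "collapses_onto ?K' {\<tau>\<in>?K'. x \<notin> \<tau>}"
    proof (rule psubset.IH)
      show "?K' \<subset> K" using \<sigma>(1) by blast
      show "star_cone ?K' x y" using star_cone_remove_pair[OF psubset.prems(3) \<sigma>(3)] .
    qed (use psubset.prems in auto)
    moreover have "{\<tau>\<in>?K'. x \<notin> \<tau>} = {\<tau>\<in>K. x \<notin> \<tau>}" using \<sigma>(2) by blast
    ultimately show ?thesis using collapses_onto_step by metis
  qed
qed

lemma finite_order_complex: "finite P \<Longrightarrow> finite (order_complex P)"
  by (rule finite_subset[of _ "Pow P"]) (auto simp: order_complex_def)

lemma order_complex_delete: "{\<sigma>\<in>order_complex P. x \<notin> \<sigma>} = order_complex (P - {x})"
  by (auto simp: order_complex_def)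

lemma star_cone_order_complex:
  fixes P :: "'a::order set"
  assumes "y \<in> P" "x \<noteq> y"
    and comparable: "\<And>z. z \<in> P \<Longrightarrow> z \<le> x \<or> x \<le> z \<Longrightarrow> z \<le> y \<or> y \<le> z"
  shows "star_cone (order_complex P) x y"
proof -
  have "insert y \<sigma> \<in> order_complex P" if "\<sigma> \<in> order_complex P" "x \<in> \<sigma>" for \<sigma>
  proof -
    have "z \<le> y \<or> y \<le> z" if "z \<in> \<sigma>" for z
      using comparable[of z] that \<open>\<sigma> \<in> order_complex P\<close> \<open>x \<in> \<sigma>\<close>
      by (auto simp: order_complex_def is_chain_def)
    then show ?thesis
      using that \<open>y \<in> P\<close> by (auto simp: order_complex_def is_chain_def)
  qed
  moreover have "\<rho> - {y} \<in> order_complex P" if "\<rho> \<in> order_complex P" "x \<in> \<rho>" for \<rho>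
    using that \<open>x \<noteq> y\<close> by (auto simp: order_complex_def is_chain_def)
  ultimately show ?thesis by (simp add: star_cone_def)
qed

lemma collapses_order_complex_delete:
  fixes P :: "'a::order set"
  assumes "finite P" "y \<in> P" "x \<noteq> y"
    and "\<And>z. z \<in> P \<Longrightarrow> z \<le> x \<or> x \<le> z \<Longrightarrow> z \<le> y \<or> y \<le> z"
  shows "collapses_onto (order_complex P) (order_complex (P - {x}))"
proof -
  have "collapses_onto (order_complex P) {\<sigma>\<in>order_complex P. x \<notin> \<sigma>}"
    using finite_order_complex[OF assms(1)] star_cone_order_complex[OF assms(2-4)] \<open>x \<noteq> y\<close>
    by (intro collapses_onto_delete_star_cone) (auto simp: order_complex_def)
  then show ?thesis by (simp add: order_complex_delete)
qed

lemma collapses_order_complex_delete_bottom_up: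
  fixes P R :: "'a::order set"
  assumes "finite P" "R \<subseteq> P"
    and "\<And>w. w \<in> R \<Longrightarrow> \<exists>y\<in>P - R. y < w \<and> (\<forall>z\<in>P - R. z < w \<longrightarrow> z \<le> y)"
  shows "collapses_onto (order_complex P) (order_complex (P - R))"
proof -
  have "finite R" using assms finite_subset by blast
  then show ?thesis
    using assms
  proof (induction R arbitrary: P rule: finite_remove_induct)
    case empty
    then show ?case by (simp add: collapses_onto_refl)
  next
    case (remove R)
    obtain m where "m \<in> R" and min: "\<forall>z\<in>R. z \<le> m \<longrightarrow> m = z"
      using finite_has_minimal[OF remove.hyps(1,2)] by blast
    then obtain y where y: "y \<in> P - R" "y < m" and below: "\<forall>z\<in>P - R. z < m \<longrightarrow> z \<le> y"
      using remove.prems(3) by blast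
    have "collapses_onto (order_complex P) (order_complex (P - {m}))"
    proof (rule collapses_order_complex_delete)
      fix z assume z: "z \<in> P" "z \<le> m \<or> m \<le> z"
      show "z \<le> y \<or> y \<le> z"
      proof (cases "z \<in> R")
        case True
        then show ?thesis using z y min by (auto dest: order.strict_implies_order)
      next
        case False
        then show ?thesis using z y below \<open>m \<in> R\<close> by (auto simp: order.order_iff_strict)
      qed
    qed (use remove.prems y in auto)
    moreover have "collapses_onto (order_complex (P - {m})) (order_complex (P - R))"
    proof -
      have "P - {m} - (R - {m}) = P - R" using \<open>m \<in> R\<close> by blast
      then show ?thesis using remove.IH[OF \<open>m \<in> R\<close>, of "P - {m}"] remove.prems by auto
    qed
    ultimately show ?case by (rule collapses_onto_trans)
  qed
qed

lemma collapses_order_complex_delete_top_down: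
  fixes P R :: "'a::order set"
  assumes "finite P" "R \<subseteq> P"
    and "\<And>w. w \<in> R \<Longrightarrow> \<exists>y\<in>P - R. w < y \<and> (\<forall>z\<in>P - R. w < z \<longrightarrow> y \<le> z)"
  shows "collapses_onto (order_complex P) (order_complex (P - R))"
proof -
  have "finite R" using assms finite_subset by blast
  then show ?thesis
    using assms
  proof (induction R arbitrary: P rule: finite_remove_induct)
    case empty
    then show ?case by (simp add: collapses_onto_refl)
  next
    case (remove R)
    obtain m where "m \<in> R" and max: "\<forall>z\<in>R. m \<le> z \<longrightarrow> m = z"
      using finite_has_maximal[OF remove.hyps(1,2)] by blast
    then obtain y where y: "y \<in> P - R" "m < y" and above: "\<forall>z\<in>P - R. m < z \<longrightarrow> y \<le> z"
      using remove.prems(3) by blast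
    have "collapses_onto (order_complex P) (order_complex (P - {m}))"
    proof (rule collapses_order_complex_delete)
      fix z assume z: "z \<in> P" "z \<le> m \<or> m \<le> z"
      show "z \<le> y \<or> y \<le> z"
      proof (cases "z \<in> R")
        case True
        then show ?thesis using z y max by (auto dest: order.strict_implies_order)
      next
        case False
        then show ?thesis using z y above \<open>m \<in> R\<close> by (auto simp: order.order_iff_strict)
      qed
    qed (use remove.prems y in auto)
    moreover have "collapses_onto (order_complex (P - {m})) (order_complex (P - R))"
    proof -
      have "P - {m} - (R - {m}) = P - R" using \<open>m \<in> R\<close> by blast
      then show ?thesis using remove.IH[OF \<open>m \<in> R\<close>, of "P - {m}"] remove.prems by auto
    qed
    ultimately show ?case by (rule collapses_onto_trans)
  qed
qed

lemma crosscut_comparable_pair: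
  assumes "is_crosscut C" "a \<le> b"
  obtains c where "c \<in> C" "c \<le> a \<or> a \<le> c" "c \<le> b \<or> b \<le> c"
proof -
  have "is_chain {a, b}" using assms(2) by (auto simp: is_chain_def)
  then obtain c where "c \<in> C" "is_chain (insert c {a, b})"
    using assms(1) unfolding is_crosscut_def by blast
  then show ?thesis using that unfolding is_chain_def by blast
qed

lemma crosscut_antichain: "is_crosscut C \<Longrightarrow> c \<in> C \<Longrightarrow> d \<in> C \<Longrightarrow> c \<le> d \<Longrightarrow> c = d"
  by (simp add: is_crosscut_def is_antichain_def)

lemma crosscut_above_if_none_below:
  assumes "is_crosscut C" "\<forall>c\<in>C. \<not> c \<le> w"
  obtains c where "c \<in> C" "w \<le> c"
  using crosscut_comparable_pair[OF assms(1) order_refl[of w]] assms(2) by blast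

lemma crosscut_between_if_none_below:
  fixes C :: "'a::bounded_lattice set"
  assumes cc: "is_crosscut C" and "c0 \<in> C" "c0 \<le> w" "z \<le> w" and none: "\<forall>c\<in>C. \<not> c \<le> z"
  obtains c where "c \<in> C" "z \<le> c" "c \<le> w"
proof -
  obtain c where c: "c \<in> C" "c \<le> z \<or> z \<le> c" "c \<le> sup z c0 \<or> sup z c0 \<le> c"
    using crosscut_comparable_pair[OF cc sup_ge1] .
  have "c \<le> w"
  proof (cases "c \<le> sup z c0")
    case True
    then show ?thesis using assms(3,4) by (meson le_sup_iff order_trans)
  next
    case False
    then have "c0 \<le> c" using c(3) by simp
    then show ?thesis using crosscut_antichain[OF cc \<open>c0 \<in> C\<close> c(1)] \<open>c0 \<le> w\<close> by simp
  qed
  then show ?thesis using that c none by blast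
qed

lemma crosscut_between_if_none_above:
  fixes C :: "'a::bounded_lattice set"
  assumes cc: "is_crosscut C" and "c0 \<in> C" "w \<le> c0" "w \<le> z" and none: "\<forall>c\<in>C. \<not> z \<le> c"
  obtains c where "c \<in> C" "w \<le> c" "c \<le> z"
proof -
  obtain c where c: "c \<in> C" "c \<le> inf z c0 \<or> inf z c0 \<le> c" "c \<le> z \<or> z \<le> c"
    using crosscut_comparable_pair[OF cc inf_le1] .
  have "w \<le> c"
  proof (cases "inf z c0 \<le> c")
    case True
    then show ?thesis using assms(3,4) by (meson le_inf_iff order_trans)
  next
    case False
    then have "c \<le> c0" using c(2) by simp
    then show ?thesis using crosscut_antichain[OF cc c(1) \<open>c0 \<in> C\<close>] \<open>w \<le> c0\<close> by simp
  qed
  then show ?thesis using that c none by blast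
qed

lemma crosscut_part_eq_Sup_below:
  fixes C :: "'a::bounded_lattice set"
  assumes cc: "is_crosscut C" and "finite C" "z \<in> crosscut_part C" "c \<in> C" "c \<le> z"
  shows "Sup_fin {d\<in>C. d \<le> z} = z"
proof (rule antisym)
  let ?S = "{d\<in>C. d \<le> z}"
  have fin: "finite ?S" using \<open>finite C\<close> by simp
  show "Sup_fin ?S \<le> z" using fin \<open>c \<in> C\<close> \<open>c \<le> z\<close> by (auto intro: Sup_fin.boundedI)
  from \<open>z \<in> crosscut_part C\<close> consider
      (join) D where "D \<subseteq> C" "D \<noteq> {}" "z = Sup_fin D"
    | (meet) D where "D \<subseteq> C" "D \<noteq> {}" "z = Inf_fin D"
    unfolding crosscut_part_def by blast
  then show "z \<le> Sup_fin ?S"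
  proof cases
    case join
    have "finite D" using join(1) \<open>finite C\<close> finite_subset by blast
    then have "D \<subseteq> ?S" using join Sup_fin.coboundedI by fastforce
    then show ?thesis using join fin Sup_fin.subset_imp by metis
  next
    case meet
    obtain d where "d \<in> D" using meet(2) by blast
    have "finite D" using meet(1) \<open>finite C\<close> finite_subset by blast
    then have "z \<le> d" using meet \<open>d \<in> D\<close> Inf_fin.coboundedI by blast
    then have "c = d" using crosscut_antichain[OF cc \<open>c \<in> C\<close>] \<open>c \<le> z\<close> \<open>d \<in> D\<close> meet(1) by auto
    then have "z \<in> ?S" using \<open>c \<in> C\<close> \<open>c \<le> z\<close> \<open>z \<le> d\<close> by auto
    then show ?thesis using fin Sup_fin.coboundedI by blast
  qed
qed

lemma crosscut_part_eq_Inf_above: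
  fixes C :: "'a::bounded_lattice set"
  assumes cc: "is_crosscut C" and "finite C" "z \<in> crosscut_part C" "c \<in> C" "z \<le> c"
  shows "Inf_fin {d\<in>C. z \<le> d} = z"
proof (rule antisym)
  let ?S = "{d\<in>C. z \<le> d}"
  have fin: "finite ?S" using \<open>finite C\<close> by simp
  show "z \<le> Inf_fin ?S" using fin \<open>c \<in> C\<close> \<open>z \<le> c\<close> by (auto intro: Inf_fin.boundedI)
  from \<open>z \<in> crosscut_part C\<close> consider
      (join) D where "D \<subseteq> C" "D \<noteq> {}" "z = Sup_fin D"
    | (meet) D where "D \<subseteq> C" "D \<noteq> {}" "z = Inf_fin D"
    unfolding crosscut_part_def by blast
  then show "Inf_fin ?S \<le> z"
  proof cases
    case meet
    have "finite D" using meet(1) \<open>finite C\<close> finite_subset by blast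
    then have "D \<subseteq> ?S" using meet Inf_fin.coboundedI by fastforce
    then show ?thesis using meet fin Inf_fin.subset_imp by metis
  next
    case join
    obtain d where "d \<in> D" using join(2) by blast
    have "finite D" using join(1) \<open>finite C\<close> finite_subset by blast
    then have "d \<le> z" using join \<open>d \<in> D\<close> Sup_fin.coboundedI by blast
    then have "d = c" using crosscut_antichain[OF cc _ \<open>c \<in> C\<close>] \<open>z \<le> c\<close> \<open>d \<in> D\<close> join(1) by auto
    then have "z \<in> ?S" using \<open>c \<in> C\<close> \<open>z \<le> c\<close> \<open>d \<le> z\<close> by auto
    then show ?thesis using fin Inf_fin.coboundedI by blast
  qed
qed

lemma crosscut_lower_cone:
  fixes C :: "'a::bounded_lattice set"
  assumes cc: "is_crosscut C" and "finite C"
    and w: "w \<in> proper_part" "w \<notin> crosscut_part C" and "c0 \<in> C" "c0 \<le> w"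
  shows "\<exists>y\<in>crosscut_part C. y < w \<and>
           (\<forall>z. z \<le> w \<longrightarrow> z \<in> crosscut_part C \<or> (\<forall>c\<in>C. \<not> c \<le> z) \<longrightarrow> z \<le> y)"
proof -
  define S where "S = {c\<in>C. c \<le> w}"
  have S: "finite S" "S \<subseteq> C" "c0 \<in> S" using assms by (auto simp: S_def)
  have "c0 \<le> Sup_fin S" using S by (blast intro: Sup_fin.coboundedI)
  moreover have "Sup_fin S \<le> w" using S by (auto intro: Sup_fin.boundedI simp: S_def)
  moreover have "c0 \<noteq> bot" "w \<noteq> top"
    using cc \<open>c0 \<in> C\<close> w(1) by (auto simp: is_crosscut_def proper_part_def)
  ultimately have y: "Sup_fin S \<in> crosscut_part C"
    using S unfolding crosscut_part_def proper_part_def by (auto simp: bot_unique top_unique)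
  with \<open>Sup_fin S \<le> w\<close> w(2) have "Sup_fin S < w" by (auto simp: order.order_iff_strict)
  moreover have "z \<le> Sup_fin S"
    if "z \<le> w" and "z \<in> crosscut_part C \<or> (\<forall>c\<in>C. \<not> c \<le> z)" for z
  proof (cases "\<exists>c\<in>C. c \<le> z")
    case True
    then obtain c where "c \<in> C" "c \<le> z" by blast
    have "{d\<in>C. d \<le> z} \<subseteq> S" using \<open>z \<le> w\<close> by (auto simp: S_def)
    then have "Sup_fin {d\<in>C. d \<le> z} \<le> Sup_fin S"
      using S \<open>c \<in> C\<close> \<open>c \<le> z\<close> by (intro Sup_fin.subset_imp) auto
    then show ?thesis
      using crosscut_part_eq_Sup_below[OF cc \<open>finite C\<close> _ \<open>c \<in> C\<close> \<open>c \<le> z\<close>] True that(2) by auto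
  next
    case False
    then obtain c where "c \<in> C" "z \<le> c" "c \<le> w"
      using crosscut_between_if_none_below[OF cc \<open>c0 \<in> C\<close> \<open>c0 \<le> w\<close> \<open>z \<le> w\<close>] by blast
    then show ?thesis using S Sup_fin.coboundedI[of S c] by (auto simp: S_def)
  qed
  ultimately show ?thesis using y by blast
qed

lemma crosscut_upper_cone:
  fixes C :: "'a::bounded_lattice set"
  assumes cc: "is_crosscut C" and "finite C"
    and w: "w \<in> proper_part" "w \<notin> crosscut_part C" and "c0 \<in> C" "w \<le> c0"
  shows "\<exists>y\<in>crosscut_part C. w < y \<and>
           (\<forall>z. w \<le> z \<longrightarrow> z \<in> crosscut_part C \<or> (\<forall>c\<in>C. \<not> z \<le> c) \<longrightarrow> y \<le> z)"
proof -
  define S where "S = {c\<in>C. w \<le> c}"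
  have S: "finite S" "S \<subseteq> C" "c0 \<in> S" using assms by (auto simp: S_def)
  have "Inf_fin S \<le> c0" using S by (blast intro: Inf_fin.coboundedI)
  moreover have "w \<le> Inf_fin S" using S by (auto intro: Inf_fin.boundedI simp: S_def)
  moreover have "c0 \<noteq> top" "w \<noteq> bot"
    using cc \<open>c0 \<in> C\<close> w(1) by (auto simp: is_crosscut_def proper_part_def)
  ultimately have y: "Inf_fin S \<in> crosscut_part C"
    using S unfolding crosscut_part_def proper_part_def by (auto simp: bot_unique top_unique)
  with \<open>w \<le> Inf_fin S\<close> w(2) have "w < Inf_fin S" by (auto simp: order.order_iff_strict)
  moreover have "Inf_fin S \<le> z"
    if "w \<le> z" and "z \<in> crosscut_part C \<or> (\<forall>c\<in>C. \<not> z \<le> c)" for z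
  proof (cases "\<exists>c\<in>C. z \<le> c")
    case True
    then obtain c where "c \<in> C" "z \<le> c" by blast
    have "{d\<in>C. z \<le> d} \<subseteq> S" using \<open>w \<le> z\<close> by (auto simp: S_def)
    then have "Inf_fin S \<le> Inf_fin {d\<in>C. z \<le> d}"
      using S \<open>c \<in> C\<close> \<open>z \<le> c\<close> by (intro Inf_fin.subset_imp) auto
    then show ?thesis
      using crosscut_part_eq_Inf_above[OF cc \<open>finite C\<close> _ \<open>c \<in> C\<close> \<open>z \<le> c\<close>] True that(2) by auto
  next
    case False
    then obtain c where "c \<in> C" "w \<le> c" "c \<le> z"
      using crosscut_between_if_none_above[OF cc \<open>c0 \<in> C\<close> \<open>w \<le> c0\<close> \<open>w \<le> z\<close>] by blast
    then show ?thesis using S Inf_fin.coboundedI[of S c] by (auto simp: S_def)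
  qed
  ultimately show ?thesis using y by blast
qed

lemma collapses_delete_above_crosscut:
  fixes C :: "'a::{finite, bounded_lattice} set"
  assumes "is_crosscut C"
  shows "collapses_onto (order_complex proper_part)
           (order_complex (crosscut_part C \<union> {w\<in>proper_part. \<forall>c\<in>C. \<not> c \<le> w}))"
    (is "collapses_onto _ (order_complex ?Q)")
proof -
  define X where "X = {w\<in>proper_part. (\<exists>c\<in>C. c \<le> w) \<and> w \<notin> crosscut_part C}"
  have Q_eq: "proper_part - X = ?Q" by (auto simp: X_def crosscut_part_def)
  show ?thesis
  proof (rule collapses_order_complex_delete_bottom_up[of proper_part X, unfolded Q_eq])
    fix w assume "w \<in> X"
    then obtain c0 where w: "w \<in> proper_part" "w \<notin> crosscut_part C" and "c0 \<in> C" "c0 \<le> w"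
      by (auto simp: X_def)
    then show "\<exists>y\<in>?Q. y < w \<and> (\<forall>z\<in>?Q. z < w \<longrightarrow> z \<le> y)"
      using crosscut_lower_cone[OF assms finite w] by (blast dest: order.strict_implies_order)
  qed (auto simp: X_def)
qed

lemma collapses_delete_not_above_crosscut:
  fixes C :: "'a::{finite, bounded_lattice} set"
  assumes "is_crosscut C"
  shows "collapses_onto (order_complex (crosscut_part C \<union> {w\<in>proper_part. \<forall>c\<in>C. \<not> c \<le> w}))
           (order_complex (crosscut_part C))"
    (is "collapses_onto (order_complex ?Q) _")
proof -
  define V where "V = {w\<in>proper_part. (\<forall>c\<in>C. \<not> c \<le> w) \<and> w \<notin> crosscut_part C}"
  have T_eq: "?Q - V = crosscut_part C" by (auto simp: V_def)
  show ?thesis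
  proof (rule collapses_order_complex_delete_top_down[of ?Q V, unfolded T_eq])
    fix w assume "w \<in> V"
    then have w: "w \<in> proper_part" "w \<notin> crosscut_part C" "\<forall>c\<in>C. \<not> c \<le> w"
      by (auto simp: V_def)
    then obtain c0 where "c0 \<in> C" "w \<le> c0" using crosscut_above_if_none_below[OF assms] by blast
    then show "\<exists>y\<in>crosscut_part C. w < y \<and> (\<forall>z\<in>crosscut_part C. w < z \<longrightarrow> y \<le> z)"
      using crosscut_upper_cone[OF assms finite w(1,2)] by (blast dest: order.strict_implies_order)
  qed (auto simp: V_def)
qed

theorem mainTheorem5:
  fixes C :: "'a::{finite, bounded_lattice} set"
  assumes "is_crosscut C"
  shows "collapses_onto (order_complex (proper_part :: 'a set))
                        (order_complex (crosscut_part C))"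
  using collapses_delete_above_crosscut[OF assms] collapses_delete_not_above_crosscut[OF assms]
  by (rule collapses_onto_trans)

end
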